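(* In the setting described in the context, for every $i$ with $1\le i\le m-1$, the bounding triangle $T_i$ contains no point of $P$ in its interior.
   Context: $P$ is a finite set of points in the plane, $s,t\in P$ distinct, and coordinates are chosen so that $t=(0,0)$ and $s$ lies in $C_2^t$ below the line $\ell_t^-=\{x+y=0\}$. Cones: $C_0^v=\{x\ge v_x,y\le v_y\}$, $C_1^v=\{x\ge v_x,y\ge v_y\}$, $C_2^v=\{x\le v_x,y\ge v_y\}$, $C_3^v=\{x\le v_x,y\le v_y\}$ with bisector directions $(1,-1),(1,1),(-1,1),(-1,-1)$. The $\Theta_4$-graph of $P$ has, for each $v\in P$ and cone $C_i^v$ containing a point of $P\setminus\{v\}$, a directed edge from $v$ to a point $w$ of $(P\setminus\{v\})\cap C_i^v$ minimizing the projection of $w-v$ onto the bisector direction (the neighbour of $v$ in $C_i^v$). For a point $p$, $\ell_p^-$ and $\ell_p^+$ are the lines through $p$ of slope $-1$ and $+1$. Algorithm: for a vertex $v$, let $T(v,\ell_t^-)=C_1^v\cap\{x+y\le0\}$ if $v_x+v_y<0$, $T(v,\ell_t^-)=C_3^v\cap\{x+y\ge0\}$ if $v_x+v_y>0$, and $\{v\}$ if $v_x+v_y=0$; $v$ is clean if $T(v,\ell_t^-)$ contains no point of $P$ other than $v$. Starting at $v=s$, while $v\ne t$: if $v$ is not clean, take a sweeping step (go to the neighbour of $v$ in $C_1^v$, resp. $C_3^v$, which lies in $T(v,\ell_t^-)$); otherwise take a greedy step (go to the neighbour of $v$ in the cone $C_i^v$ containing $t$). Let $(p_1,q_1),\dots,(p_{m-1},q_{m-1})$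 be, in order, the edges traversed by greedy steps, and set $p_m=t$. Quadrants of $t$: Northern $=\{y\ge|x|\}$, Southern $=\{y\le-|x|\}$, Western $=\{x\le-|y|\}$, Eastern $=\{x\ge|y|\}$. Bounding triangle: if $p_i$ is in the Northern or Southern quadrant let $\mathcal{L}$ be the horizontal line through $p_i$, otherwise the vertical line through $p_i$; $T_i$ is the triangle formed by the lines $\ell_t^-$, $\mathcal{L}$ and $\ell_{q_i}^+$. *)

theory Defs
  imports "HOL-Analysis.Analysis"
begin

type_synonym pt = "real \<times> real"

definition cone :: "nat \<Rightarrow> pt \<Rightarrow> pt set" where
  "cone i v = (if i = 0 then {w. fst w \<ge> fst v \<and> snd w \<le> snd v}
     else if i = 1 then {w. fst w \<ge> fst v \<and> snd w \<ge> snd v}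
     else if i = 2 then {w. fst w \<le> fst v \<and> snd w \<ge> snd v}
     else {w. fst w \<le> fst v \<and> snd w \<le> snd v})"

definition bisector :: "nat \<Rightarrow> pt" where
  "bisector i = (if i = 0 then (1, -1) else if i = 1 then (1, 1)
     else if i = 2 then (-1, 1) else (-1, -1))"

text \<open>(Unnormalised) projection of w - v onto the bisector of cone i.\<close>
definition proj :: "nat \<Rightarrow> pt \<Rightarrow> pt \<Rightarrow> real" where
  "proj i v w = (w - v) \<bullet> bisector i"

text \<open>nb is a valid neighbour function of the Theta_4-graph of P:
  for each v in P and each nonempty cone, nb v i is a point of the cone
  (other than v) minimising the projection onto the bisector.\<close>
definition theta4_nb :: "pt set \<Rightarrow> (pt \<Rightarrow> nat \<Rightarrow> pt) \<Rightarrow> bool" where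
  "theta4_nb P nb \<longleftrightarrow> (\<forall>v\<in>P. \<forall>i<4. (P - {v}) \<inter> cone i v \<noteq> {} \<longrightarrow>
      nb v i \<in> (P - {v}) \<inter> cone i v \<and>
      (\<forall>w \<in> (P - {v}) \<inter> cone i v. proj i v (nb v i) \<le> proj i v w))"

text \<open>The region T(v, l_t^-) with t = (0,0), l_t^- = {x + y = 0}.\<close>
definition Treg :: "pt \<Rightarrow> pt set" where
  "Treg v = (if fst v + snd v < 0 then cone 1 v \<inter> {w. fst w + snd w \<le> 0}
     else if fst v + snd v > 0 then cone 3 v \<inter> {w. fst w + snd w \<ge> 0}
     else {v})"

definition clean :: "pt set \<Rightarrow> pt \<Rightarrow> bool" where
  "clean P v \<longleftrightarrow> Treg v \<inter> P \<subseteq> {v}"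

text \<open>One step of the routing algorithm towards t = (0,0).
  Sweeping step if v is not clean, greedy step otherwise (into a cone containing t).\<close>
definition alg_step :: "pt set \<Rightarrow> (pt \<Rightarrow> nat \<Rightarrow> pt) \<Rightarrow> pt \<Rightarrow> pt \<Rightarrow> bool" where
  "alg_step P nb v w \<longleftrightarrow>
     (\<not> clean P v \<and> w = (if fst v + snd v < 0 then nb v 1 else nb v 3)) \<or>
     (clean P v \<and> (\<exists>i<4. (0,0) \<in> cone i v \<and> w = nb v i))"

definition alg_route :: "pt set \<Rightarrow> (pt \<Rightarrow> nat \<Rightarrow> pt) \<Rightarrow> pt \<Rightarrow> pt list \<Rightarrow> bool" where
  "alg_route P nb s vs \<longleftrightarrow> vs \<noteq> [] \<and> hd vs = s \<and> last vs = (0,0) \<and>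
     (\<forall>j < length vs - 1. vs ! j \<noteq> (0,0) \<and> alg_step P nb (vs ! j) (vs ! Suc j))"

text \<open>Bounding triangle of the greedy edge (p,q): the triangle bounded by the lines
  x + y = 0, the line L through p (horizontal if p is in the Northern or Southern
  quadrant of t, i.e. |x| <= |y|, vertical otherwise) and the line through q of slope 1.
  Its vertices are the three pairwise intersection points of these lines.\<close>
definition bounding_triangle :: "pt \<Rightarrow> pt \<Rightarrow> pt set" where
  "bounding_triangle p q =
     (let d = snd q - fst q; a = (- d / 2, d / 2) in
      if \<bar>fst p\<bar> \<le> \<bar>snd p\<bar>
      then convex hull {a, (- snd p, snd p), (snd p - d, snd p)}
      else convex hull {a, (fst p, - fst p), (fst p, fst p + d)})"

end

theory Submission
  imports Defs
begin

text \<open>A clean vertex \<open>v\<close> never takes a greedy step into \<open>C\<^sub>1\<^sup>v\<close> or \<open>C\<^sub>3\<^sup>v\<close>, since then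
  \<open>t\<close> itself would lie in \<open>T(v, \<ell>\<^sub>t\<^sup>-)\<close>. So the greedy edge \<open>(v, q)\<close> goes into \<open>C\<^sub>0\<^sup>v\<close>
  or \<open>C\<^sub>2\<^sup>v\<close>, and the point reflection \<open>z \<mapsto> -z\<close>, which preserves the regions
  \<open>T(v, \<ell>\<^sub>t\<^sup>-)\<close>, the bounding triangles and the \<open>\<Theta>\<^sub>4\<close>-graph up to exchanging
  \<open>C\<^sub>0\<close> and \<open>C\<^sub>2\<close>, reduces the latter case to the former. A point of \<open>P\<close> in the
  interior of the bounding triangle lies strictly above \<open>\<ell>\<^sub>q\<^sup>+\<close>, hence outside
  \<open>C\<^sub>0\<^sup>v\<close> by the minimality of \<open>q\<close>; the part of the interior outside \<open>C\<^sub>0\<^sup>v\<close> lies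
  in \<open>T(v, \<ell>\<^sub>t\<^sup>-)\<close>, which is empty because \<open>v\<close> is clean.\<close>

lemma interior_convex_hull_halfspace_lt:
  fixes f w :: "'a::euclidean_space"
  assumes "f \<noteq> 0" and "\<forall>z\<in>S. f \<bullet> z \<le> c" and "w \<in> interior (convex hull S)"
  shows "f \<bullet> w < c"
proof -
  have "convex hull S \<subseteq> {z. f \<bullet> z \<le> c}"
    using assms(2) by (intro hull_minimal) (auto simp: convex_halfspace_le)
  then have "interior (convex hull S) \<subseteq> {z. f \<bullet> z < c}"
    using interior_mono interior_halfspace_le[OF assms(1)] by metis
  then show ?thesis using assms(3) by blast
qed

lemma theta4_nbD:
  assumes "theta4_nb P nb" "v \<in> P" "i < 4" "z \<in> P" "z \<noteq> v" "z \<in> cone i v"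
  shows "nb v i \<in> P" "nb v i \<in> cone i v"
    and "\<And>w. w \<in> P \<Longrightarrow> w \<noteq> v \<Longrightarrow> w \<in> cone i v \<Longrightarrow> proj i v (nb v i) \<le> proj i v w"
proof -
  have "(P - {v}) \<inter> cone i v \<noteq> {}" using assms(4-6) by blast
  then show "nb v i \<in> P" "nb v i \<in> cone i v"
    and "\<And>w. w \<in> P \<Longrightarrow> w \<noteq> v \<Longrightarrow> w \<in> cone i v \<Longrightarrow> proj i v (nb v i) \<le> proj i v w"
    using assms(1-3) unfolding theta4_nb_def by blast+
qed

lemma alg_step_in_P:
  assumes nb: "theta4_nb P nb" and t: "(0,0) \<in> P" and v: "v \<in> P" "v \<noteq> (0,0)"
    and step: "alg_step P nb v w"
  shows "w \<in> P"
proof (cases "clean P v")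
  case True
  then obtain i where "i < 4" "(0,0) \<in> cone i v" "w = nb v i"
    using step unfolding alg_step_def by auto
  then show ?thesis using theta4_nbD(1)[OF nb v(1) _ t] v(2) by metis
next
  case False
  then obtain z where z: "z \<in> Treg v" "z \<in> P" "z \<noteq> v" unfolding clean_def by auto
  define i :: nat where "i = (if fst v + snd v < 0 then 1 else 3)"
  have "z \<in> cone i v" "w = nb v i"
    using z False step by (auto simp: i_def Treg_def alg_step_def split: if_splits)
  then show ?thesis using theta4_nbD(1)[OF nb v(1) _ z(2,3)] by (simp add: i_def)
qed

lemma alg_route_in_P:
  assumes "theta4_nb P nb" "(0,0) \<in> P" "s \<in> P" "alg_route P nb s vs" "j < length vs"
  shows "vs ! j \<in> P"
  using assms(5)
proof (induction j)
  case 0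
  then show ?case using assms(3,4) by (auto simp: alg_route_def hd_conv_nth)
next
  case (Suc j)
  then show ?case using alg_step_in_P[OF assms(1,2)] assms(4) by (auto simp: alg_route_def)
qed

lemma origin_in_Treg:
  assumes "(0,0) \<in> cone 1 v \<or> (0,0) \<in> cone 3 v"
  shows "(0,0) \<in> Treg v"
  using assms by (cases v) (auto simp: cone_def Treg_def)

lemma cone_uminus: "- z \<in> cone 0 (- v) \<longleftrightarrow> z \<in> cone 2 v"
  by (auto simp: cone_def)

lemma proj_uminus: "proj 0 (- v) (- z) = proj 2 v z"
  by (simp add: proj_def bisector_def inner_prod_def algebra_simps)

lemma Treg_uminus: "- z \<in> Treg (- v) \<longleftrightarrow> z \<in> Treg v"
  by (auto simp: Treg_def cone_def)

lemma clean_uminus: "clean (uminus ` P) (- v) \<longleftrightarrow> clean P v"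
proof -
  have "clean (uminus ` P) (- v) \<longleftrightarrow> (\<forall>z\<in>P. - z \<in> Treg (- v) \<longrightarrow> - z = - v)"
    unfolding clean_def by blast
  also have "\<dots> \<longleftrightarrow> clean P v"
    unfolding clean_def Treg_uminus by auto
  finally show ?thesis .
qed

lemma bounding_triangle_uminus:
  "bounding_triangle (- p) (- q) = uminus ` bounding_triangle p q"
  by (simp add: bounding_triangle_def Let_def convex_hull_linear_image[OF linear_uminus]
      minus_divide_left algebra_simps del: divide_minus_left)

lemma bounding_triangle_cone0_empty:
  assumes clean: "clean P v"
    and t: "(0,0) \<in> cone 0 v" and q: "q \<in> cone 0 v"
    and q_min: "\<And>z. z \<in> P \<Longrightarrow> z \<noteq> v \<Longrightarrow> z \<in> cone 0 v \<Longrightarrow> proj 0 v q \<le> proj 0 v z"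
  shows "P \<inter> interior (bounding_triangle v q) = {}"
proof (rule ccontr)
  assume "P \<inter> interior (bounding_triangle v q) \<noteq> {}"
  then obtain a b where wP: "(a,b) \<in> P" and wT: "(a,b) \<in> interior (bounding_triangle v q)"
    by auto
  obtain x y where v: "v = (x,y)" by (cases v)
  define d where "d = snd q - fst q"
  have xy: "x \<le> 0" "0 \<le> y" and d: "d \<le> y - x"
    using t q by (auto simp: v cone_def d_def)
  have not_Treg: "(a,b) \<notin> Treg v" if "(a,b) \<noteq> v"
    using clean wP that unfolding clean_def by blast
  have not_cone0: "(a,b) \<notin> cone 0 v" if "(a,b) \<noteq> v" "d < b - a"
    using q_min[OF wP that(1)] that(2)
    by (cases q) (auto simp: v cone_def proj_def bisector_def d_def)
  have halfspace: "f \<bullet> (a,b) < c" if "f \<noteq> 0" "\<forall>z\<in>S. f \<bullet> z \<le> c" "bounding_triangle v q = convex hull S"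
    for f c S using interior_convex_hull_halfspace_lt[OF that(1,2)] wT that(3) by simp
  show False
  proof (cases "x + y < 0")
    case True
    then have T: "bounding_triangle v q = convex hull {(- d / 2, d / 2), (x, - x), (x, x + d)}"
      using xy unfolding bounding_triangle_def Let_def d_def[symmetric] by (simp add: v)
    have "x < a" "d < b - a" "a + b < 0"
      using halfspace[OF _ _ T, of "(-1,0)" "-x"] halfspace[OF _ _ T, of "(1,-1)" "-d"]
        halfspace[OF _ _ T, of "(1,1)" 0] True d by (auto simp: zero_prod_def)
    then show False
      using not_Treg not_cone0 by (auto simp: v Treg_def cone_def)
  next
    case False
    then have T: "bounding_triangle v q = convex hull {(- d / 2, d / 2), (- y, y), (y - d, y)}"
      using xy unfolding bounding_triangle_def Let_def d_def[symmetric] by (simp add: v)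
    have "b < y" "0 < a + b" "d < b - a"
      using halfspace[OF _ _ T, of "(0,1)" y] halfspace[OF _ _ T, of "(-1,-1)" 0]
        halfspace[OF _ _ T, of "(1,-1)" "-d"] False xy d by (auto simp: zero_prod_def)
    then show False
      using not_Treg not_cone0 by (auto simp: v Treg_def cone_def)
  qed
qed

lemma bounding_triangle_cone2_empty:
  assumes "clean P v" "(0,0) \<in> cone 2 v" "q \<in> cone 2 v"
    and q_min: "\<And>z. z \<in> P \<Longrightarrow> z \<noteq> v \<Longrightarrow> z \<in> cone 2 v \<Longrightarrow> proj 2 v q \<le> proj 2 v z"
  shows "P \<inter> interior (bounding_triangle v q) = {}"
proof -
  have "uminus ` P \<inter> interior (bounding_triangle (- v) (- q)) = {}"
  proof (rule bounding_triangle_cone0_empty)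
    show "clean (uminus ` P) (- v)" using assms(1) by (simp add: clean_uminus)
    show "(0,0) \<in> cone 0 (- v)" using assms(2) cone_uminus[of "(0,0)" v] by simp
    show "- q \<in> cone 0 (- v)" using assms(3) by (simp add: cone_uminus)
    show "proj 0 (- v) (- q) \<le> proj 0 (- v) z"
      if z: "z \<in> uminus ` P" "z \<noteq> - v" "z \<in> cone 0 (- v)" for z
    proof -
      obtain z' where z': "z = - z'" "z' \<in> P" using z(1) by blast
      then have "proj 2 v q \<le> proj 2 v z'"
        using q_min z(2,3) cone_uminus by auto
      then show ?thesis by (simp add: z'(1) proj_uminus)
    qed
  qed
  then have "uminus ` (P \<inter> interior (bounding_triangle v q)) = {}"
    by (simp add: bounding_triangle_uminus interior_negations image_Int)
  then show ?thesis by blast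
qed

lemma clean_greedy_bounding_triangle_empty:
  assumes nb: "theta4_nb P nb" and t: "(0,0) \<in> P" and v: "v \<in> P" "v \<noteq> (0,0)"
    and clean: "clean P v" and i: "i < 4" "(0,0) \<in> cone i v"
  shows "P \<inter> interior (bounding_triangle v (nb v i)) = {}"
proof -
  note nbD = theta4_nbD[OF nb v(1) i(1) t v(2)[symmetric] i(2)]
  have "(0,0) \<notin> Treg v" using clean t v(2) unfolding clean_def by blast
  then have "i \<noteq> 1" "i \<noteq> 3" using origin_in_Treg i(2) by blast+
  then consider "i = 0" | "i = 2" using i(1) by linarith
  then show ?thesis
  proof cases
    case 1
    show ?thesis using bounding_triangle_cone0_empty[OF clean] i(2) nbD unfolding 1 by blast
  next
    case 2
    show ?thesis using bounding_triangle_cone2_empty[OF clean] i(2) nbD unfolding 2 by blast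
  qed
qed

theorem lemma2:
  fixes P :: "(real \<times> real) set" and s :: "real \<times> real"
    and nb :: "real \<times> real \<Rightarrow> nat \<Rightarrow> real \<times> real" and vs :: "(real \<times> real) list"
  assumes "finite P" and "(0,0) \<in> P" and "s \<in> P" and "s \<noteq> (0,0)"
    and "s \<in> cone 2 (0,0)" and "fst s + snd s < 0"
    and "theta4_nb P nb"
    and "alg_route P nb s vs"
  shows "\<forall>j < length vs - 1. clean P (vs ! j) \<longrightarrow>
           P \<inter> interior (bounding_triangle (vs ! j) (vs ! Suc j)) = {}"
proof (intro allI impI)
  fix j assume j: "j < length vs - 1" and clean: "clean P (vs ! j)"
  have v0: "vs ! j \<noteq> (0,0)" and step: "alg_step P nb (vs ! j) (vs ! Suc j)"
    using assms(8) j unfolding alg_route_def by auto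
  obtain i where i: "i < 4" "(0,0) \<in> cone i (vs ! j)" and succ: "vs ! Suc j = nb (vs ! j) i"
    using step clean unfolding alg_step_def by auto
  have v: "vs ! j \<in> P" using alg_route_in_P[OF assms(7,2,3,8)] j by simp
  show "P \<inter> interior (bounding_triangle (vs ! j) (vs ! Suc j)) = {}"
    unfolding succ by (rule clean_greedy_bounding_triangle_empty[OF assms(7,2) v v0 clean i])
qed

end
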